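(* (Type weakening.) In DCC, if $\Delta;\Gamma\vdash M:A$, $\Delta;\Gamma\vdash B:U_i$, and $x$ is a variable not occurring in $\Gamma$, then $\Delta;\Gamma,x{:}B\vdash M:A$.
   Context: DCC: expressions $A,B,L,M,N::=x\mid U_i\mid\Pi x{:}A.B\mid L@M\mid\ell_i\{\overline M\}$, where $\ell_i$ are label names disjoint from variables and $\overline M=M_1,\dots,M_n$ ($n\ge0$). Type contexts $\Gamma::=\cdot\mid\Gamma,x{:}A$; label contexts $\Delta::=\cdot\mid\Delta,\ell_i(\{\overline x{:}\overline A\},x{:}A\mapsto M:B)$. Substitution standard with $\ell\{\overline M\}[N/x]=\ell\{\overline{M[N/x]}\}$. Reduction: $\Delta\vdash\ell\{\overline M\}@N\triangleright L[\overline M/\overline x,N/x]$ when $\ell(\{\overline x{:}\overline A\},x{:}A\mapsto L:B)\in\Delta$. Equivalence $\Delta\vdash M\equiv N$: common reduct, or the $\eta$-rule ($\Delta\vdash L\triangleright^*\ell\{\overline N\}$, $\Delta\vdash M\triangleright^*M'$, $\ell(\{\overline x{:}\overline A\},x{:}A\mapsto N:B)\in\Delta$, $\Delta\vdash N[\overline N/\overline x]\equiv M'@x$ give $\Delta\vdash L\equiv M$) and its symmetric version. Typing $\Delta;\Gamma\vdash M:A$ and formation $\vdash\Delta;\Gamma$ (mutual): variables from a well-formed context, $U_i:U_{i+1}$, $\Pi x{:}A.B:U_{\max(i,j)}$, $M@N:B[N/x]$ when $M:\Pi x{:}A.B$ and $N:A$, conversion along $\equiv$ to a type $B:U_i$,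 and: if $\vdash\Delta;\Gamma$, $\ell(\{\overline x{:}\overline A\},x{:}A\mapsto M:B)\in\Delta$, $|\overline M|=|\overline x|$ and $\Delta;\Gamma\vdash M_k:A_k[M_1/x_1,\dots,M_{k-1}/x_{k-1}]$ for all $k$, then $\Delta;\Gamma\vdash\ell\{\overline M\}:\Pi x{:}A[\overline M/\overline x].B[\overline M/\overline x]$. Formation: $\vdash\cdot;\cdot$; fresh label entries may be added when $\Delta;\overline x{:}\overline A\vdash\Pi x{:}A.B:U_i$ and $\Delta;\overline x{:}\overline A,x{:}A\vdash M:B$; $\vdash\Delta;\Gamma$ and $\Delta;\Gamma\vdash A:U_i$ give $\vdash\Delta;\Gamma,x{:}A$. *)

theory Defs
  imports Main
begin

type_synonym var = nat
type_synonym lname = nat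

datatype expr =
    Var var
  | U nat
  | Pi var expr expr
  | App expr expr
  | Lab lname "expr list"

text \<open>Label context entry  \<ell>({x1:A1,...,xn:An}, x:A \<mapsto> M : B)\<close>
datatype ldef = LDef lname "(var \<times> expr) list" var expr expr expr

fun ldef_name :: "ldef \<Rightarrow> lname" where
  "ldef_name (LDef l _ _ _ _ _) = l"

fun fv :: "expr \<Rightarrow> var set" where
  "fv (Var x) = {x}"
| "fv (U i) = {}"
| "fv (Pi x A B) = fv A \<union> (fv B - {x})"
| "fv (App M N) = fv M \<union> fv N"
| "fv (Lab l Ms) = \<Union> (set (map fv Ms))"

definition fresh :: "var set \<Rightarrow> var" where
  "fresh S = Suc (Max (insert 0 S))"

text \<open>Capture-avoiding simultaneous substitution; the bound variable is renamed
  only when it would capture a free variable of a substituted term.\<close>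
fun psubst :: "(var \<Rightarrow> expr) \<Rightarrow> expr \<Rightarrow> expr" where
  "psubst \<sigma> (Var x) = \<sigma> x"
| "psubst \<sigma> (U i) = U i"
| "psubst \<sigma> (Pi y A B) =
     (let R = \<Union> ((\<lambda>w. fv (\<sigma> w)) ` (fv B - {y}));
          z = (if y \<in> R then fresh (fv B \<union> R) else y)
      in Pi z (psubst \<sigma> A) (psubst (\<sigma>(y := Var z)) B))"
| "psubst \<sigma> (App M N) = App (psubst \<sigma> M) (psubst \<sigma> N)"
| "psubst \<sigma> (Lab l Ms) = Lab l (map (psubst \<sigma>) Ms)"

text \<open>The substitution [M1/x1,...,Mn/xn] (simultaneous).\<close>
definition sig :: "(var \<times> expr) list \<Rightarrow> expr list \<Rightarrow> var \<Rightarrow> expr" where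
  "sig ps Ms = foldl (\<lambda>\<sigma> (y, M). \<sigma>(y := M)) Var (zip (map fst ps) Ms)"

inductive red :: "ldef list \<Rightarrow> expr \<Rightarrow> expr \<Rightarrow> bool" for \<Delta> where
  beta: "LDef l ps x A L B \<in> set \<Delta> \<Longrightarrow> length Ms = length ps \<Longrightarrow>
         red \<Delta> (App (Lab l Ms) N) (psubst ((sig ps Ms)(x := N)) L)"
| pi1: "red \<Delta> A A' \<Longrightarrow> red \<Delta> (Pi x A B) (Pi x A' B)"
| pi2: "red \<Delta> B B' \<Longrightarrow> red \<Delta> (Pi x A B) (Pi x A B')"
| app1: "red \<Delta> M M' \<Longrightarrow> red \<Delta> (App M N) (App M' N)"
| app2: "red \<Delta> N N' \<Longrightarrow> red \<Delta> (App M N) (App M N')"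
| lab: "red \<Delta> M M' \<Longrightarrow> red \<Delta> (Lab l (Ms1 @ M # Ms2)) (Lab l (Ms1 @ M' # Ms2))"

abbreviation reds :: "ldef list \<Rightarrow> expr \<Rightarrow> expr \<Rightarrow> bool" where
  "reds \<Delta> \<equiv> (red \<Delta>)\<^sup>*\<^sup>*"

inductive equiv :: "ldef list \<Rightarrow> expr \<Rightarrow> expr \<Rightarrow> bool" for \<Delta> where
  common: "reds \<Delta> M P \<Longrightarrow> reds \<Delta> N P \<Longrightarrow> equiv \<Delta> M N"
| eta: "reds \<Delta> L (Lab l Ns) \<Longrightarrow> reds \<Delta> M M' \<Longrightarrow> LDef l ps x A N B \<in> set \<Delta> \<Longrightarrow>
        length Ns = length ps \<Longrightarrow>
        equiv \<Delta> (psubst (sig ps Ns) N) (App M' (Var x)) \<Longrightarrow> equiv \<Delta> L M"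
| eta_sym: "reds \<Delta> L (Lab l Ns) \<Longrightarrow> reds \<Delta> M M' \<Longrightarrow> LDef l ps x A N B \<in> set \<Delta> \<Longrightarrow>
        length Ns = length ps \<Longrightarrow>
        equiv \<Delta> (App M' (Var x)) (psubst (sig ps Ns) N) \<Longrightarrow> equiv \<Delta> M L"

inductive typing :: "ldef list \<Rightarrow> (var \<times> expr) list \<Rightarrow> expr \<Rightarrow> expr \<Rightarrow> bool"
  and wf :: "ldef list \<Rightarrow> (var \<times> expr) list \<Rightarrow> bool"
where
  t_var: "wf \<Delta> \<Gamma> \<Longrightarrow> (x, A) \<in> set \<Gamma> \<Longrightarrow> typing \<Delta> \<Gamma> (Var x) A"
| t_univ: "wf \<Delta> \<Gamma> \<Longrightarrow> typing \<Delta> \<Gamma> (U i) (U (Suc i))"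
| t_pi: "typing \<Delta> \<Gamma> A (U i) \<Longrightarrow> typing \<Delta> (\<Gamma> @ [(x, A)]) B (U j) \<Longrightarrow>
         typing \<Delta> \<Gamma> (Pi x A B) (U (max i j))"
| t_app: "typing \<Delta> \<Gamma> M (Pi x A B) \<Longrightarrow> typing \<Delta> \<Gamma> N A \<Longrightarrow>
          typing \<Delta> \<Gamma> (App M N) (psubst (Var(x := N)) B)"
| t_conv: "typing \<Delta> \<Gamma> M A \<Longrightarrow> equiv \<Delta> A B \<Longrightarrow> typing \<Delta> \<Gamma> B (U i) \<Longrightarrow>
           typing \<Delta> \<Gamma> M B"
| t_lab: "wf \<Delta> \<Gamma> \<Longrightarrow> LDef l ps x A L B \<in> set \<Delta> \<Longrightarrow> length Ms = length ps \<Longrightarrow>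
          (\<forall>k < length Ms. typing \<Delta> \<Gamma> (Ms ! k)
              (psubst (sig (take k ps) (take k Ms)) (snd (ps ! k)))) \<Longrightarrow>
          typing \<Delta> \<Gamma> (Lab l Ms) (psubst (sig ps Ms) (Pi x A B))"
| wf_empty: "wf [] []"
| wf_label: "wf \<Delta> [] \<Longrightarrow> l \<notin> ldef_name ` set \<Delta> \<Longrightarrow>
             typing \<Delta> ps (Pi x A B) (U i) \<Longrightarrow> typing \<Delta> (ps @ [(x, A)]) M B \<Longrightarrow>
             wf (\<Delta> @ [LDef l ps x A M B]) []"
| wf_var: "wf \<Delta> \<Gamma> \<Longrightarrow> typing \<Delta> \<Gamma> A (U i) \<Longrightarrow> wf \<Delta> (\<Gamma> @ [(x, A)])"

end

theory Submission
  imports Defs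
begin

text \<open>Weakening must be proved for insertion at an arbitrary position of the context, since
  the premise of \<open>\<Pi>\<close>-formation extends the context on the right; the typing and formation
  judgements are then handled by a simultaneous induction. Variables are looked up by list
  membership.\<close>

lemma typing_imp_wf: "typing \<Delta> \<Gamma> M A \<Longrightarrow> wf \<Delta> \<Gamma>"
  by (induction rule: typing_wf.inducts(1)[where ?P2.0 = "\<lambda>_ _. True"]) auto

lemma wf_snoc_typed: "typing \<Delta> \<Gamma> A (U i) \<Longrightarrow> wf \<Delta> (\<Gamma> @ [(x, A)])"
  by (blast intro: typing_wf.wf_var typing_imp_wf)

lemma typing_weaken:
  "typing \<Delta> \<Gamma> M A \<Longrightarrow> \<Gamma> = \<Gamma>\<^sub>1 @ \<Gamma>\<^sub>2 \<Longrightarrow> typing \<Delta> \<Gamma>\<^sub>1 C (U n) \<Longrightarrow>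
     typing \<Delta> (\<Gamma>\<^sub>1 @ (z, C) # \<Gamma>\<^sub>2) M A"
  and wf_weaken:
  "wf \<Delta> \<Gamma> \<Longrightarrow> \<Gamma> = \<Gamma>\<^sub>1 @ \<Gamma>\<^sub>2 \<Longrightarrow> typing \<Delta> \<Gamma>\<^sub>1 C (U n) \<Longrightarrow>
     wf \<Delta> (\<Gamma>\<^sub>1 @ (z, C) # \<Gamma>\<^sub>2)"
proof (induction arbitrary: \<Gamma>\<^sub>1 \<Gamma>\<^sub>2 and \<Gamma>\<^sub>1 \<Gamma>\<^sub>2 rule: typing_wf.inducts)
  case (t_var \<Delta> \<Gamma> y A)
  then show ?case by (auto intro!: typing_wf.t_var)
next
  case (t_univ \<Delta> \<Gamma> i)
  then show ?case by (auto intro!: typing_wf.t_univ)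
next
  case (t_pi \<Delta> \<Gamma> A i y B j)
  have "typing \<Delta> (\<Gamma>\<^sub>1 @ (z, C) # \<Gamma>\<^sub>2) A (U i)"
    using t_pi by blast
  moreover have "typing \<Delta> ((\<Gamma>\<^sub>1 @ (z, C) # \<Gamma>\<^sub>2) @ [(y, A)]) B (U j)"
    using t_pi.IH(2)[of \<Gamma>\<^sub>1 "\<Gamma>\<^sub>2 @ [(y, A)]"] t_pi.prems by simp
  ultimately show ?case by (rule typing_wf.t_pi)
next
  case (t_app \<Delta> \<Gamma> M y A B N)
  then show ?case by (blast intro: typing_wf.t_app)
next
  case (t_conv \<Delta> \<Gamma> M A B i)
  then show ?case by (blast intro: typing_wf.t_conv)
next
  case (t_lab \<Delta> \<Gamma> l ps y A L B Ms)
  have wf: "wf \<Delta> (\<Gamma>\<^sub>1 @ (z, C) # \<Gamma>\<^sub>2)"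
    using t_lab by blast
  have args: "\<forall>k < length Ms. typing \<Delta> (\<Gamma>\<^sub>1 @ (z, C) # \<Gamma>\<^sub>2) (Ms ! k)
      (psubst (sig (take k ps) (take k Ms)) (snd (ps ! k)))"
    using t_lab.IH(2) t_lab.prems by blast
  show ?case by (rule typing_wf.t_lab[OF wf t_lab.hyps(2,3) args])
next
  case wf_empty
  then show ?case using wf_snoc_typed[of _ "[]"] by simp
next
  case (wf_label \<Delta> l ps y A B i M)
  then show ?case using wf_snoc_typed[of _ "[]"] by simp
next
  case (wf_var \<Delta> \<Gamma> A i y)
  show ?case
  proof (cases \<Gamma>\<^sub>2 rule: rev_cases)
    case Nil
    then show ?thesis using wf_var.prems by (simp add: wf_snoc_typed)
  next
    case (snoc \<Gamma>\<^sub>2' p)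
    with wf_var.prems have "\<Gamma> = \<Gamma>\<^sub>1 @ \<Gamma>\<^sub>2'" "p = (y, A)" by auto
    with wf_var.IH wf_var.prems
    have "wf \<Delta> ((\<Gamma>\<^sub>1 @ (z, C) # \<Gamma>\<^sub>2') @ [(y, A)])"
      by (blast intro: typing_wf.wf_var)
    then show ?thesis using snoc \<open>p = (y, A)\<close> by simp
  qed
qed

theorem lemma3p1:
  assumes "typing \<Delta> \<Gamma> M A"
    and "typing \<Delta> \<Gamma> B (U i)"
    and "x \<notin> fst ` set \<Gamma>"
  shows "typing \<Delta> (\<Gamma> @ [(x, B)]) M A"
  using typing_weaken[OF assms(1) _ assms(2), of "[]"] by simp

end
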